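(* Let $G$ be a graph on $d+2$ vertices with adjacency matrix $A_G$ having eigenvalues $\lambda_1\geq\lambda_2\geq\dots\geq\lambda_{d+2}$, and let $k>1$ with $\overline{B_G}=\frac{1}{k^2-1}I-A_G$. Suppose that $w^T\overline{B_G}w\geq 0$ for all $w\in\mathbf{1}^\perp$, that there exist a nonzero $w\in\mathbf{1}^\perp$ and a real $\gamma$ with $\overline{B_G}w=\gamma\mathbf{1}$, and that $\det(\overline{B_G})=0$. If $\lambda_1>\lambda_2$, then every eigenvector of $A_G$ with eigenvalue $\lambda_2$ lies in $\mathbf{1}^\perp$. If $\lambda_1=\lambda_2$, then a basis of the $\lambda_2$-eigenspace of $A_G$ can be chosen so that all but one of its vectors lie in $\mathbf{1}^\perp$.
   Context: Graphs are finite and simple; $\mathbf{1}$ is the all-ones vector and $\mathbf{1}^\perp$ its orthogonal complement. *)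

theory Defs
  imports "HOL-Analysis.Analysis" "HOL-Computational_Algebra.Polynomial"
begin

definition simple_graph :: "('n::finite \<Rightarrow> 'n \<Rightarrow> bool) \<Rightarrow> bool" where
  "simple_graph E \<longleftrightarrow> (\<forall>i j. E i j \<longrightarrow> E j i) \<and> (\<forall>i. \<not> E i i)"

definition adjacency_matrix :: "('n::finite \<Rightarrow> 'n \<Rightarrow> bool) \<Rightarrow> real^'n^'n" where
  "adjacency_matrix E = (\<chi> i j. if E i j then 1 else 0)"

definition charpoly :: "real^'n^'n \<Rightarrow> real poly" where
  "charpoly A = det (\<chi> i j. (if i = j then [:0, 1:] else 0) - [:A $ i $ j:])"

text \<open>Eigenvalues counted with (algebraic) multiplicity, in non-increasing order:
  lambda_1 = eigvals_desc A ! 0, lambda_2 = eigvals_desc A ! 1, ...\<close>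
definition eigvals_desc :: "real^'n::finite^'n \<Rightarrow> real list" where
  "eigvals_desc A = (THE ls. length ls = CARD('n) \<and> sorted_wrt (\<ge>) ls \<and>
      charpoly A = (\<Prod>a\<leftarrow>ls. [:- a, 1:]))"

definition Bbar :: "real \<Rightarrow> ('n::finite \<Rightarrow> 'n \<Rightarrow> bool) \<Rightarrow> real^'n^'n" where
  "Bbar k E = (1 / (k\<^sup>2 - 1)) *\<^sub>R mat 1 - adjacency_matrix E"

end

(* A is symmetric with nonnegative entries, so it has an orthonormal eigenbasis, and by the
   Perron argument its top eigenvalue lambda_1 has an eigenvector p with p . 1 > 0.  Put
   mu = 1/(k^2 - 1); the hypotheses say that x . A x <= mu |x|^2 on the hyperplane 1^perp, that
   equality holds for some w /= 0 there, and that mu is an eigenvalue of A.  For orthogonal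
   eigenvectors p, v with eigenvalues a, b the vector (v . 1) p - (p . 1) v lies in 1^perp, whence
     (v . 1)^2 |p|^2 (a - mu) + (p . 1)^2 |v|^2 (b - mu) <= 0,
   and in particular lambda_2 <= mu.  If lambda_1 > lambda_2, then mu /= lambda_1, since otherwise w
   would be a top eigenvector, i.e. a multiple of p, orthogonal to 1; so mu = lambda_2, and the
   inequality for p and a lambda_2-eigenvector v forces v . 1 = 0.  If lambda_1 = lambda_2, then p
   lies in the lambda_2-eigenspace and completes any basis of its intersection with 1^perp. *)

theory Submission
  imports Defs
begin

section \<open>Spectral theorem for real symmetric matrices\<close>

lemma symmetric_matrix_inner:
  fixes A :: "real^'n^'n"
  assumes "transpose A = A"
  shows "(A *v x) \<bullet> y = x \<bullet> (A *v y)"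
  by (metis assms dot_lmul_matrix vector_transpose_matrix)

lemma symmetric_matrix_eigenvectors_orthogonal:
  fixes A :: "real^'n^'n"
  assumes "transpose A = A" "A *v x = a *\<^sub>R x" "A *v y = b *\<^sub>R y" "a \<noteq> b"
  shows "x \<bullet> y = 0"
proof -
  have "a * (x \<bullet> y) = b * (x \<bullet> y)"
    using symmetric_matrix_inner[OF assms(1), of x y] assms(2,3) by simp
  then show ?thesis using assms(4) by simp
qed

lemma rayleigh_maximizer_is_eigenvector:
  fixes A :: "real^'n^'n"
  assumes symmetric: "transpose A = A" and S: "subspace S"
    and invariant: "\<And>y. y \<in> S \<Longrightarrow> A *v y \<in> S"
    and "x \<in> S" "x \<bullet> x = 1"
    and max: "\<And>y. y \<in> S \<Longrightarrow> y \<bullet> (A *v y) \<le> (x \<bullet> (A *v x)) * (y \<bullet> y)"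
  shows "A *v x = (x \<bullet> (A *v x)) *\<^sub>R x"
proof -
  define M where "M = x \<bullet> (A *v x)"
  define z where "z = A *v x - M *\<^sub>R x"
  define K where "K = M * (z \<bullet> z) - z \<bullet> (A *v z)"
  have "z \<in> S" unfolding z_def using invariant \<open>x \<in> S\<close> S by (simp add: subspace_diff subspace_scale)
  have xz: "x \<bullet> z = 0" unfolding z_def M_def using \<open>x \<bullet> x = 1\<close> by (simp add: inner_diff_right)
  have xAz: "x \<bullet> (A *v z) = z \<bullet> z"
    using xz symmetric_matrix_inner[OF symmetric, of x z]
    by (simp add: z_def inner_diff_left inner_diff_right inner_commute)
  \<comment> \<open>second-order condition for the maximum along the direction z\<close>
  have along_z: "2 * t * (z \<bullet> z) \<le> t\<^sup>2 * K" for t :: real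
  proof -
    have "x + t *\<^sub>R z \<in> S" using \<open>x \<in> S\<close> \<open>z \<in> S\<close> S by (simp add: subspace_add subspace_scale)
    from max[OF this, folded M_def] have
      "M + 2 * t * (x \<bullet> (A *v z)) + t\<^sup>2 * (z \<bullet> (A *v z)) \<le> M * (1 + t\<^sup>2 * (z \<bullet> z))"
      using xz \<open>x \<bullet> x = 1\<close> symmetric_matrix_inner[OF symmetric, of z x]
      by (simp add: M_def inner_commute power2_eq_square algebra_simps)
    then show ?thesis unfolding K_def xAz by (simp add: algebra_simps)
  qed
  have "z \<bullet> z \<le> 0"
  proof (cases "K \<le> 0")
    case True
    then show ?thesis using along_z[of 1] by simp
  next
    case False
    have "2 * (z \<bullet> z / K) * (z \<bullet> z) \<le> (z \<bullet> z / K)\<^sup>2 * K" by (rule along_z)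
    then have "(z \<bullet> z)\<^sup>2 \<le> 0" using False by (simp add: power2_eq_square field_simps)
    then show ?thesis by simp
  qed
  then have "z = 0" by (metis inner_eq_zero_iff inner_ge_zero order_antisym)
  then show ?thesis by (simp add: z_def M_def)
qed

lemma invariant_subspace_has_unit_eigenvector:
  fixes A :: "real^'n^'n"
  assumes symmetric: "transpose A = A" and S: "subspace S" "S \<noteq> {0}"
    and invariant: "\<And>y. y \<in> S \<Longrightarrow> A *v y \<in> S"
  obtains x a where "x \<in> S" "norm x = 1" "A *v x = a *\<^sub>R x"
proof -
  let ?K = "S \<inter> sphere 0 1"
  have "compact ?K"
    by (metis Int_commute closed_subspace compact_Int_closed compact_sphere S(1))
  obtain y where "y \<in> S" "y \<noteq> 0" using S subspace_0 by blast
  then have "y /\<^sub>R norm y \<in> ?K" using S by (simp add: subspace_scale)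
  then have "?K \<noteq> {}" by blast
  moreover have "continuous_on ?K (\<lambda>x. x \<bullet> (A *v x))"
    by (intro continuous_intros linear_continuous_on matrix_vector_mul_linear)
  ultimately obtain x where "x \<in> ?K" and x_max: "\<And>y. y \<in> ?K \<Longrightarrow> y \<bullet> (A *v y) \<le> x \<bullet> (A *v x)"
    using continuous_attains_sup[OF \<open>compact ?K\<close>] by blast
  have "y \<bullet> (A *v y) \<le> (x \<bullet> (A *v x)) * (y \<bullet> y)" if "y \<in> S" for y
  proof (cases "y = 0")
    case False
    then have "y /\<^sub>R norm y \<in> ?K" using that S by (simp add: subspace_scale)
    from x_max[OF this] have "(y \<bullet> (A *v y)) / (norm y)\<^sup>2 \<le> x \<bullet> (A *v x)"
      by (simp add: matrix_vector_mult_scaleR power2_eq_square divide_inverse mult_ac)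
    then show ?thesis using False by (simp add: divide_le_eq power2_norm_eq_inner mult.commute)
  qed simp
  moreover have "x \<bullet> x = 1" using \<open>x \<in> ?K\<close> by (simp add: norm_eq_1)
  ultimately have "A *v x = (x \<bullet> (A *v x)) *\<^sub>R x"
    using \<open>x \<in> ?K\<close> by (intro rayleigh_maximizer_is_eigenvector[OF symmetric S(1) invariant]) auto
  then show ?thesis using that \<open>x \<in> ?K\<close> by auto
qed

lemma symmetric_matrix_orthonormal_eigenvectors:
  fixes A :: "real^'n^'n"
  assumes symmetric: "transpose A = A" and "m \<le> CARD('n)"
  shows "\<exists>F. finite F \<and> card F = m \<and> pairwise orthogonal F \<and>
           (\<forall>f\<in>F. norm f = 1 \<and> (\<exists>a. A *v f = a *\<^sub>R f))"
  using \<open>m \<le> CARD('n)\<close>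
proof (induction m)
  case (Suc m)
  then obtain F where F: "finite F" "card F = m" "pairwise orthogonal F"
    and eigen: "\<forall>f\<in>F. norm f = 1 \<and> (\<exists>a. A *v f = a *\<^sub>R f)" by auto
  define S where "S = {x. \<forall>f\<in>F. orthogonal f x}"
  have "subspace S" unfolding S_def by (rule subspace_orthogonal_to_vectors)
  have "dim F < DIM(real^'n)" using Suc.prems F dim_le_card' by fastforce
  then obtain y where "y \<noteq> 0" "\<And>z. z \<in> span F \<Longrightarrow> orthogonal y z"
    using orthogonal_to_subspace_exists by blast
  then have "S \<noteq> {0}" unfolding S_def using span_base orthogonal_commute by blast
  moreover have "A *v x \<in> S" if "x \<in> S" for x
  proof -
    have "f \<bullet> (A *v x) = 0" if "f \<in> F" for f
    proof -
      obtain a where "A *v f = a *\<^sub>R f" using eigen \<open>f \<in> F\<close> by blast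
      then have "f \<bullet> (A *v x) = a * (f \<bullet> x)" using symmetric_matrix_inner[OF symmetric, of f x] by simp
      then show ?thesis using \<open>x \<in> S\<close> \<open>f \<in> F\<close> unfolding S_def orthogonal_def by simp
    qed
    then show ?thesis unfolding S_def orthogonal_def by blast
  qed
  ultimately obtain x a where x: "x \<in> S" "norm x = 1" "A *v x = a *\<^sub>R x"
    using invariant_subspace_has_unit_eigenvector[OF symmetric \<open>subspace S\<close>] by blast
  have "x \<notin> F" using x unfolding S_def orthogonal_def by auto
  show ?case
  proof (intro exI conjI)
    show "card (insert x F) = Suc m" using F \<open>x \<notin> F\<close> by simp
    show "pairwise orthogonal (insert x F)"
      using F(3) x(1) unfolding S_def pairwise_insert by (auto simp: orthogonal_commute)
  qed (use F eigen x in auto)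
qed (intro exI[of _ "{}"], simp)

locale orthonormal_eigenbasis =
  fixes A :: "real^'n::finite^'n" and g :: "'n \<Rightarrow> real^'n" and \<alpha> :: "'n \<Rightarrow> real"
  assumes symmetric: "transpose A = A"
    and orthonormal: "g i \<bullet> g j = (if i = j then 1 else 0)"
    and eigenvector: "A *v g i = \<alpha> i *\<^sub>R g i"

lemma symmetric_matrix_orthonormal_eigenbasis:
  fixes A :: "real^'n^'n"
  assumes "transpose A = A"
  obtains g \<alpha> where "orthonormal_eigenbasis A g \<alpha>"
proof -
  obtain F where F: "finite F" "card F = CARD('n)" "pairwise orthogonal F"
    and eigen: "\<forall>f\<in>F. norm f = 1 \<and> (\<exists>a. A *v f = a *\<^sub>R f)"
    using symmetric_matrix_orthonormal_eigenvectors[OF assms order_refl] by blast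
  obtain g where g: "bij_betw g (UNIV :: 'n set) F"
    using finite_same_card_bij[of "UNIV :: 'n set" F] F by auto
  then have "g i \<in> F" "g i = g j \<longleftrightarrow> i = j" for i j
    by (auto simp: bij_betw_def inj_eq)
  then have "g i \<bullet> g j = (if i = j then 1 else 0)" for i j
    using F(3) eigen unfolding pairwise_def orthogonal_def by (auto simp: norm_eq_1)
  moreover have "A *v g i = (SOME a. A *v g i = a *\<^sub>R g i) *\<^sub>R g i" for i
    using \<open>g i \<in> F\<close> eigen by (metis (mono_tags, lifting) someI_ex)
  ultimately show ?thesis using assms by (intro that orthonormal_eigenbasis.intro)
qed

section \<open>Characteristic polynomial and ordered eigenvalues\<close>

lemma matrix_vector_mult_mat: "mat c *v x = c *\<^sub>R (x :: real^'n)"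
proof -
  have "mat c = c *\<^sub>R (mat 1 :: real^'n^'n)" by (simp add: vec_eq_iff mat_def)
  then show ?thesis by (simp add: scaleR_matrix_vector_assoc[symmetric])
qed

lemma rows_conjugate_matrix_nth:
  fixes M :: "real^'n^'n" and g :: "'n \<Rightarrow> real^'n"
  shows "((\<chi> i. g i) ** M ** transpose (\<chi> i. g i)) $ i $ j = g i \<bullet> (M *v g j)"
  unfolding matrix_matrix_mult_def matrix_vector_mult_def inner_vec_def transpose_def
  by (simp add: sum_distrib_left sum_distrib_right mult.assoc) (rule sum.swap)

lemma poly_charpoly: "poly (charpoly A) x = det (mat x - A)"
  unfolding charpoly_def det_def
  by (simp add: poly_sum poly_prod mat_def of_int_poly if_distrib[of "\<lambda>p. poly p x"] cong: if_cong)

lemma proots_prod_linear_factors: "proots (\<Prod>a\<leftarrow>ls. [:- a, 1:]) = mset (ls :: 'a::idom list)"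
proof (induction ls)
  case (Cons a ls)
  have "(\<Prod>b\<leftarrow>ls. [:- b, 1:]) \<noteq> (0 :: 'a poly)" by (auto simp: prod_list_zero_iff)
  then have "proots ([:- a, 1:] * (\<Prod>b\<leftarrow>ls. [:- b, 1:])) = {#a#} + mset ls"
    by (subst proots_mult) (auto simp: Cons.IH)
  then show ?case by simp
qed simp

lemma sorted_desc_mset_eq:
  fixes xs ys :: "'a::linorder list"
  assumes "sorted_wrt (\<ge>) xs" "sorted_wrt (\<ge>) ys" "mset xs = mset ys"
  shows "xs = ys"
proof -
  have "sort (rev ys) = rev xs"
    using assms by (intro properties_for_sort) (auto simp: sorted_wrt_rev)
  moreover have "sort (rev ys) = rev ys"
    using assms(2) by (simp add: sorted_wrt_rev sorted_sort_id)
  ultimately show ?thesis by simp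
qed

lemma eigvals_desc_eqI:
  assumes "length ls = CARD('n)" "sorted_wrt (\<ge>) ls"
    and "charpoly (A :: real^'n::finite^'n) = (\<Prod>a\<leftarrow>ls. [:- a, 1:])"
  shows "eigvals_desc A = ls"
  unfolding eigvals_desc_def
proof (rule the_equality)
  fix ls' assume "length ls' = CARD('n) \<and> sorted_wrt (\<ge>) ls' \<and> charpoly A = (\<Prod>a\<leftarrow>ls'. [:- a, 1:])"
  then show "ls' = ls"
    using assms sorted_desc_mset_eq by (metis proots_prod_linear_factors)
qed (use assms in blast)

lemma finite_enumeration_sorted_desc:
  fixes f :: "'n::finite \<Rightarrow> 'a::linorder"
  obtains xs where "distinct xs" "set xs = UNIV" "sorted_wrt (\<lambda>i j. f j \<le> f i) xs"
proof -
  obtain xs :: "'n list" where "distinct xs" "set xs = UNIV"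
    using finite_distinct_list[of "UNIV :: 'n set"] by auto
  moreover have "sorted_wrt (\<lambda>i j. f i \<le> f j) (sort_key f xs)"
    using sorted_sort_key[of f xs] by (simp add: sorted_wrt_map)
  ultimately show ?thesis
    using that[of "rev (sort_key f xs)"] by (simp add: sorted_wrt_rev)
qed

section \<open>Orthonormal eigenbases\<close>

context orthonormal_eigenbasis
begin

lemma orthogonal_matrix_rows: "orthogonal_matrix (\<chi> i. g i)"
proof -
  have "(\<chi> i. g i) ** transpose (\<chi> i. g i) = mat 1"
    by (simp add: matrix_mult_transpose_dot_row row_def orthonormal vec_eq_iff mat_def)
  then show ?thesis by (metis matrix_left_right_inverse orthogonal_matrix_def)
qed

lemma expansion: "x = (\<Sum>i\<in>UNIV. (g i \<bullet> x) *\<^sub>R g i)"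
proof -
  let ?U = "\<chi> i. g i"
  have "x = transpose ?U *v (?U *v x)"
    using orthogonal_matrix_rows by (simp add: matrix_vector_mul_assoc orthogonal_matrix_def)
  also have "\<dots> = (\<Sum>i\<in>UNIV. (g i \<bullet> x) *\<^sub>R g i)"
    by (simp add: vec_eq_iff matrix_vector_mult_def transpose_def inner_vec_def mult.commute)
  finally show ?thesis .
qed

lemma eq_if_coeffs_eq:
  assumes "\<And>i. g i \<bullet> x = g i \<bullet> y"
  shows "x = y"
  by (subst (1 2) expansion) (simp add: assms)

lemma parseval: "x \<bullet> y = (\<Sum>i\<in>UNIV. (g i \<bullet> x) * (g i \<bullet> y))"
  by (subst expansion[of x]) (simp add: inner_sum_left)

lemma coeff_matrix_vector: "g i \<bullet> (A *v x) = \<alpha> i * (g i \<bullet> x)"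
  using symmetric_matrix_inner[OF symmetric, of "g i" x] eigenvector[of i] by simp

lemma quadratic_form_expansion: "x \<bullet> (A *v x) = (\<Sum>i\<in>UNIV. \<alpha> i * (g i \<bullet> x)\<^sup>2)"
  by (simp add: parseval[of x "A *v x"] coeff_matrix_vector power2_eq_square algebra_simps)

lemma inner_self_expansion: "x \<bullet> x = (\<Sum>i\<in>UNIV. (g i \<bullet> x)\<^sup>2)"
  by (simp add: parseval[of x x] power2_eq_square)

lemma eigenvector_coeff: "A *v v = c *\<^sub>R v \<Longrightarrow> (\<alpha> i - c) * (g i \<bullet> v) = 0"
  using coeff_matrix_vector[of i v] by (auto simp: algebra_simps)

lemma eigenvalue_in_range:
  assumes "A *v v = c *\<^sub>R v" "v \<noteq> 0"
  obtains i where "\<alpha> i = c"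
proof -
  have "v = 0" if "\<nexists>i. \<alpha> i = c"
    using that eigenvector_coeff[OF assms(1)] by (intro eq_if_coeffs_eq) auto
  then show thesis using that assms(2) by blast
qed

lemma simple_eigenspace:
  assumes "\<And>j. j \<noteq> i \<Longrightarrow> \<alpha> j \<noteq> \<alpha> i" "A *v y = \<alpha> i *\<^sub>R y"
  shows "y = (g i \<bullet> y) *\<^sub>R g i"
proof (rule eq_if_coeffs_eq)
  fix j
  show "g j \<bullet> y = g j \<bullet> ((g i \<bullet> y) *\<^sub>R g i)"
    using eigenvector_coeff[OF assms(2), of j] assms(1)[of j] by (auto simp: orthonormal)
qed

lemma rayleigh_le:
  assumes "\<And>i. \<alpha> i \<le> L"
  shows "x \<bullet> (A *v x) \<le> L * (x \<bullet> x)"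
  unfolding quadratic_form_expansion inner_self_expansion sum_distrib_left
  using assms by (intro sum_mono mult_right_mono) auto

lemma rayleigh_eq_imp_eigenvector:
  assumes "\<And>i. \<alpha> i \<le> L" and "x \<bullet> (A *v x) = L * (x \<bullet> x)"
  shows "A *v x = L *\<^sub>R x"
proof (rule eq_if_coeffs_eq)
  fix i
  have "(\<Sum>i\<in>UNIV. (L - \<alpha> i) * (g i \<bullet> x)\<^sup>2) = 0"
    using assms(2) unfolding quadratic_form_expansion inner_self_expansion sum_distrib_left
    by (simp add: left_diff_distrib sum_subtractf)
  moreover have "\<forall>i\<in>UNIV. 0 \<le> (L - \<alpha> i) * (g i \<bullet> x)\<^sup>2" using assms(1) by simp
  ultimately have "(L - \<alpha> i) * (g i \<bullet> x)\<^sup>2 = 0" by (simp add: sum_nonneg_eq_0_iff)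
  then show "g i \<bullet> (A *v x) = g i \<bullet> (L *\<^sub>R x)"
    by (auto simp: coeff_matrix_vector algebra_simps)
qed

lemma det_mat_minus_eq_prod: "det (mat x - A) = (\<Prod>i\<in>UNIV. x - \<alpha> i)"
proof -
  let ?U = "\<chi> i. g i"
  have diagonal: "?U ** (mat x - A) ** transpose ?U = (\<chi> i j. if i = j then x - \<alpha> i else 0)"
    by (simp add: vec_eq_iff rows_conjugate_matrix_nth matrix_vector_mult_diff_rdistrib
        matrix_vector_mult_mat eigenvector orthonormal inner_diff_right)
  have "det ?U * det ?U = 1"
    using det_orthogonal_matrix[OF orthogonal_matrix_rows] by auto
  then have "det (mat x - A) = det (?U ** (mat x - A) ** transpose ?U)"
    by (simp add: det_mul)
  also have "\<dots> = (\<Prod>i\<in>UNIV. x - \<alpha> i)"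
    unfolding diagonal by (subst det_diagonal) auto
  finally show ?thesis .
qed

lemma charpoly_eq: "charpoly A = (\<Prod>i\<in>UNIV. [:- \<alpha> i, 1:])"
  by (rule poly_eq_poly_eq_iff[THEN iffD1])
    (simp add: poly_charpoly det_mat_minus_eq_prod poly_prod fun_eq_iff)

lemma eigvals_desc_top_two:
  assumes "CARD('n) \<ge> 2"
  obtains i1 i2 where "i1 \<noteq> i2" "\<alpha> i1 = eigvals_desc A ! 0" "\<alpha> i2 = eigvals_desc A ! 1"
    "\<forall>j. \<alpha> j \<le> eigvals_desc A ! 0" "\<forall>j. j \<noteq> i1 \<longrightarrow> \<alpha> j \<le> eigvals_desc A ! 1"
proof -
  obtain xs where xs: "distinct xs" "set xs = UNIV" and sorted: "sorted_wrt (\<lambda>i j. \<alpha> j \<le> \<alpha> i) xs"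
    using finite_enumeration_sorted_desc by blast
  have length: "length xs = CARD('n)" using xs distinct_card by fastforce
  have "eigvals_desc A = map \<alpha> xs"
  proof (rule eigvals_desc_eqI)
    show "sorted_wrt (\<ge>) (map \<alpha> xs)" using sorted by (simp add: sorted_wrt_map)
    show "charpoly A = (\<Prod>a\<leftarrow>map \<alpha> xs. [:- a, 1:])"
      using xs by (simp add: charpoly_eq prod.distinct_set_conv_list[symmetric])
  qed (simp add: length)
  then have nth: "eigvals_desc A ! m = \<alpha> (xs ! m)" if "m < CARD('n)" for m
    using that length by simp
  have le: "\<alpha> (xs ! m) \<le> \<alpha> (xs ! l)" if "l \<le> m" "m < CARD('n)" for l m
    using that sorted length by (cases "l = m") (auto simp: sorted_wrt_iff_nth_less)
  show ?thesis
  proof (intro that allI impI)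
    show "xs ! 0 \<noteq> xs ! 1" using xs(1) length assms by (simp add: nth_eq_iff_index_eq)
    show "\<alpha> (xs ! 0) = eigvals_desc A ! 0" "\<alpha> (xs ! 1) = eigvals_desc A ! 1"
      using nth assms by auto
    fix j
    obtain m where m: "m < CARD('n)" "j = xs ! m" using xs(2) length by (metis UNIV_I in_set_conv_nth)
    show "\<alpha> j \<le> eigvals_desc A ! 0" using le[of 0 m] nth m by simp
    assume "j \<noteq> xs ! 0"
    then show "\<alpha> j \<le> eigvals_desc A ! 1" using le[of 1 m] nth assms m by (cases m) auto
  qed
qed

lemma perron_eigenvector:
  assumes nonneg: "\<And>i j. 0 \<le> A $ i $ j" and top: "\<And>j. \<alpha> j \<le> \<alpha> i"
  obtains p where "A *v p = \<alpha> i *\<^sub>R p" "0 < p \<bullet> vec 1"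
proof -
  define p :: "real^'n" where "p = (\<chi> k. \<bar>g i $ k\<bar>)"
  have quadratic_form: "y \<bullet> (A *v y) = (\<Sum>k\<in>UNIV. \<Sum>l\<in>UNIV. y $ k * A $ k $ l * y $ l)"
    for y :: "real^'n"
    by (simp add: inner_vec_def matrix_vector_mult_def sum_distrib_left mult.assoc)
  have "p \<bullet> p = g i \<bullet> g i" by (simp add: p_def inner_vec_def)
  then have pp: "p \<bullet> p = 1" by (simp add: orthonormal)
  have "\<alpha> i = g i \<bullet> (A *v g i)" by (simp add: eigenvector orthonormal)
  \<comment> \<open>taking absolute values cannot decrease the quadratic form of a nonnegative matrix\<close>
  also have "\<dots> \<le> p \<bullet> (A *v p)"
    unfolding quadratic_form
  proof (intro sum_mono)
    fix k l
    have "g i $ k * A $ k $ l * g i $ l \<le> \<bar>g i $ k * A $ k $ l * g i $ l\<bar>" by simp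
    also have "\<dots> = p $ k * A $ k $ l * p $ l" using nonneg[of k l] by (simp add: p_def abs_mult)
    finally show "g i $ k * A $ k $ l * g i $ l \<le> p $ k * A $ k $ l * p $ l" .
  qed
  finally have "p \<bullet> (A *v p) = \<alpha> i * (p \<bullet> p)" using rayleigh_le[OF top, of p] pp by simp
  then have "A *v p = \<alpha> i *\<^sub>R p" by (rule rayleigh_eq_imp_eigenvector[OF top])
  moreover have "0 < p \<bullet> vec 1"
  proof -
    have "p \<noteq> 0" using pp by auto
    then have "\<exists>k. 0 < p $ k" by (auto simp: p_def vec_eq_iff)
    then show ?thesis
      unfolding inner_vec_def by (auto simp: p_def intro: sum_pos2)
  qed
  ultimately show ?thesis by (rule that)
qed

lemma basis_nonzero: "g i \<noteq> 0"
  using orthonormal[of i i] by auto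

lemma simple_top_eigenvector_orthogonal_ones_eq_0:
  assumes nonneg: "\<And>i j. 0 \<le> A $ i $ j" and top: "\<And>j. \<alpha> j \<le> \<alpha> i"
    and simple: "\<And>j. j \<noteq> i \<Longrightarrow> \<alpha> j \<noteq> \<alpha> i"
    and "A *v w = \<alpha> i *\<^sub>R w" "w \<bullet> vec 1 = 0"
  shows "w = 0"
proof -
  obtain p where p: "A *v p = \<alpha> i *\<^sub>R p" "0 < p \<bullet> vec 1"
    by (rule perron_eigenvector[OF nonneg top])
  have "p = (g i \<bullet> p) *\<^sub>R g i" "w = (g i \<bullet> w) *\<^sub>R g i"
    using simple_eigenspace[OF simple] p(1) \<open>A *v w = \<alpha> i *\<^sub>R w\<close> by blast+
  then have "0 < (g i \<bullet> p) * (g i \<bullet> vec 1)" "(g i \<bullet> w) * (g i \<bullet> vec 1) = 0"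
    using p(2) \<open>w \<bullet> vec 1 = 0\<close> by (metis inner_scaleR_left)+
  then have "g i \<bullet> w = 0" by auto
  then show ?thesis using \<open>w = (g i \<bullet> w) *\<^sub>R g i\<close> by simp
qed

end

section \<open>Quadratic forms bounded on a hyperplane\<close>

lemma hyperplane_bound_two_eigenvectors:
  fixes A :: "real^'n^'n"
  assumes bound: "\<forall>x. x \<bullet> u = 0 \<longrightarrow> x \<bullet> (A *v x) \<le> \<mu> * (x \<bullet> x)"
    and "A *v p = a *\<^sub>R p" "A *v v = b *\<^sub>R v" "p \<bullet> v = 0"
  shows "(v \<bullet> u)\<^sup>2 * (p \<bullet> p) * (a - \<mu>) + (p \<bullet> u)\<^sup>2 * (v \<bullet> v) * (b - \<mu>) \<le> 0"
proof -
  define z where "z = (v \<bullet> u) *\<^sub>R p - (p \<bullet> u) *\<^sub>R v"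
  have "z \<bullet> u = 0" by (simp add: z_def inner_diff_left)
  then have "z \<bullet> (A *v z) \<le> \<mu> * (z \<bullet> z)" using bound by blast
  moreover have "z \<bullet> (A *v z) = (v \<bullet> u)\<^sup>2 * a * (p \<bullet> p) + (p \<bullet> u)\<^sup>2 * b * (v \<bullet> v)"
    using assms(2-4) by (simp add: z_def inner_commute power2_eq_square algebra_simps)
  moreover have "z \<bullet> z = (v \<bullet> u)\<^sup>2 * (p \<bullet> p) + (p \<bullet> u)\<^sup>2 * (v \<bullet> v)"
    using assms(4) by (simp add: z_def inner_commute power2_eq_square algebra_simps)
  ultimately show ?thesis by (simp add: algebra_simps)
qed

lemma hyperplane_bound_min_eigenvalues:
  fixes A :: "real^'n^'n"
  assumes bound: "\<forall>x. x \<bullet> u = 0 \<longrightarrow> x \<bullet> (A *v x) \<le> \<mu> * (x \<bullet> x)"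
    and "A *v p = a *\<^sub>R p" "A *v v = b *\<^sub>R v" "p \<bullet> v = 0" "p \<noteq> 0" "v \<noteq> 0"
  shows "min a b \<le> \<mu>"
proof (rule ccontr)
  assume "\<not> min a b \<le> \<mu>"
  then have "\<mu> < a" "\<mu> < b" by auto
  have "0 \<le> (v \<bullet> u)\<^sup>2 * (p \<bullet> p) * (a - \<mu>)" "0 \<le> (p \<bullet> u)\<^sup>2 * (v \<bullet> v) * (b - \<mu>)"
    using \<open>\<mu> < a\<close> \<open>\<mu> < b\<close> by simp_all
  then have "(v \<bullet> u)\<^sup>2 * (p \<bullet> p) * (a - \<mu>) = 0"
    using hyperplane_bound_two_eigenvectors[OF assms(1-4)] by linarith
  then have "v \<bullet> u = 0" using \<open>p \<noteq> 0\<close> \<open>\<mu> < a\<close> by simp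
  then have "v \<bullet> (A *v v) \<le> \<mu> * (v \<bullet> v)" using bound by blast
  then show False using \<open>A *v v = b *\<^sub>R v\<close> \<open>v \<noteq> 0\<close> \<open>\<mu> < b\<close> by simp
qed

lemma hyperplane_bound_eigenvector_orthogonal:
  fixes A :: "real^'n^'n"
  assumes bound: "\<forall>x. x \<bullet> u = 0 \<longrightarrow> x \<bullet> (A *v x) \<le> \<mu> * (x \<bullet> x)"
    and "A *v p = a *\<^sub>R p" "A *v v = \<mu> *\<^sub>R v" "p \<bullet> v = 0" "p \<noteq> 0" "\<mu> < a"
  shows "v \<bullet> u = 0"
proof -
  have "0 < p \<bullet> p" using \<open>p \<noteq> 0\<close> by simp
  then show ?thesis
    using hyperplane_bound_two_eigenvectors[OF assms(1-4)] \<open>\<mu> < a\<close>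
    by (simp add: mult_le_0_iff del: inner_gt_zero_iff)
qed

lemma subspace_basis_one_outside_hyperplane:
  fixes V :: "'a::euclidean_space set"
  assumes "subspace V" "p \<in> V" "p \<bullet> u \<noteq> 0"
  obtains B where "independent B" "span B = V" "card {b \<in> B. b \<bullet> u \<noteq> 0} = 1"
proof -
  define W where "W = V \<inter> {v. v \<bullet> u = 0}"
  have "subspace W" unfolding W_def
    by (intro subspace_inter assms(1)) (auto simp: subspace_def inner_add_left)
  obtain B' where B': "B' \<subseteq> W" "independent B'" "span B' = W"
    by (metis basis_exists span_subspace \<open>subspace W\<close>)
  have "p \<notin> span B'" using assms(3) B'(3) by (simp add: W_def)
  have "span (insert p B') = V"
  proof
    show "span (insert p B') \<subseteq> V" using B'(1) assms(1,2) by (simp add: W_def span_minimal)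
    show "V \<subseteq> span (insert p B')"
    proof
      fix v assume "v \<in> V"
      define t where "t = (v \<bullet> u) / (p \<bullet> u)"
      have "v - t *\<^sub>R p \<in> W"
        using \<open>v \<in> V\<close> assms by (simp add: W_def t_def subspace_diff subspace_scale inner_diff_left)
      then show "v \<in> span (insert p B')"
        using B'(3) span_breakdown_eq by blast
    qed
  qed
  moreover have "{b \<in> insert p B'. b \<bullet> u \<noteq> 0} = {p}" using assms(3) B'(1) by (auto simp: W_def)
  moreover have "independent (insert p B')" using B'(2) \<open>p \<notin> span B'\<close> by (simp add: independent_insert)
  ultimately show ?thesis using that[of "insert p B'"] by simp
qed

lemma second_eigenvectors_orthogonal_ones:
  fixes A :: "real^'n^'n"
  assumes symmetric: "transpose A = A" and nonneg: "\<And>i j. 0 \<le> A $ i $ j" and "CARD('n) \<ge> 2"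
    and bound: "\<forall>x. x \<bullet> vec 1 = 0 \<longrightarrow> x \<bullet> (A *v x) \<le> \<mu> * (x \<bullet> x)"
    and w: "w \<noteq> 0" "w \<bullet> vec 1 = 0" "w \<bullet> (A *v w) = \<mu> * (w \<bullet> w)"
    and u: "A *v u = \<mu> *\<^sub>R u" "u \<noteq> 0"
    and gap: "eigvals_desc A ! 1 < eigvals_desc A ! 0"
    and v: "A *v v = (eigvals_desc A ! 1) *\<^sub>R v"
  shows "v \<bullet> vec 1 = 0"
proof -
  obtain g \<alpha> where "orthonormal_eigenbasis A g \<alpha>"
    by (rule symmetric_matrix_orthonormal_eigenbasis[OF symmetric])
  then interpret orthonormal_eigenbasis A g \<alpha> .
  obtain i1 i2 where "i1 \<noteq> i2" "\<alpha> i1 = eigvals_desc A ! 0" "\<alpha> i2 = eigvals_desc A ! 1"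
    "\<forall>j. \<alpha> j \<le> eigvals_desc A ! 0" "\<forall>j. j \<noteq> i1 \<longrightarrow> \<alpha> j \<le> eigvals_desc A ! 1"
    by (rule eigvals_desc_top_two[OF \<open>CARD('n) \<ge> 2\<close>])
  then have top: "\<alpha> j \<le> \<alpha> i1" and second: "j \<noteq> i1 \<Longrightarrow> \<alpha> j \<le> \<alpha> i2" for j
    by auto
  have simple: "\<alpha> j \<noteq> \<alpha> i1" if "j \<noteq> i1" for j
    using second[OF that] gap \<open>\<alpha> i1 = _\<close> \<open>\<alpha> i2 = _\<close> by simp
  have "min (\<alpha> i1) (\<alpha> i2) \<le> \<mu>"
    using \<open>i1 \<noteq> i2\<close> by (intro hyperplane_bound_min_eigenvalues[OF bound eigenvector eigenvector])
      (auto simp: orthonormal basis_nonzero)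
  then have "\<alpha> i2 \<le> \<mu>" using top[of i2] by (simp add: min_absorb2)
  moreover have "\<mu> \<noteq> \<alpha> i1"
  proof
    assume "\<mu> = \<alpha> i1"
    then have "A *v w = \<alpha> i1 *\<^sub>R w" using w(3) top by (intro rayleigh_eq_imp_eigenvector) auto
    then show False
      using simple_top_eigenvector_orthogonal_ones_eq_0[OF nonneg top simple] w(1,2) by blast
  qed
  moreover obtain j where "\<alpha> j = \<mu>" using eigenvalue_in_range[OF u] .
  ultimately have "\<mu> = \<alpha> i2" "\<mu> < \<alpha> i1" using second[of j] top[of j] by force+
  moreover have "g i1 \<bullet> v = 0"
    using symmetric_matrix_eigenvectors_orthogonal[OF symmetric eigenvector v] gap \<open>\<alpha> i1 = _\<close> by simp
  ultimately show ?thesis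
    using v \<open>\<alpha> i2 = _\<close> by (intro hyperplane_bound_eigenvector_orthogonal[OF bound eigenvector[of i1]])
      (auto simp: basis_nonzero)
qed

lemma top_eigenspace_basis_one_not_orthogonal_ones:
  fixes A :: "real^'n^'n"
  assumes symmetric: "transpose A = A" and nonneg: "\<And>i j. 0 \<le> A $ i $ j" and "CARD('n) \<ge> 2"
    and "eigvals_desc A ! 0 = eigvals_desc A ! 1"
  shows "\<exists>B. independent B \<and> span B = {v. A *v v = (eigvals_desc A ! 1) *\<^sub>R v} \<and>
           card {b \<in> B. b \<bullet> vec 1 \<noteq> 0} = 1"
proof -
  obtain g \<alpha> where "orthonormal_eigenbasis A g \<alpha>"
    by (rule symmetric_matrix_orthonormal_eigenbasis[OF symmetric])
  then interpret orthonormal_eigenbasis A g \<alpha> .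
  obtain i1 i2 where "i1 \<noteq> i2" "\<alpha> i1 = eigvals_desc A ! 0" "\<alpha> i2 = eigvals_desc A ! 1"
    "\<forall>j. \<alpha> j \<le> eigvals_desc A ! 0" "\<forall>j. j \<noteq> i1 \<longrightarrow> \<alpha> j \<le> eigvals_desc A ! 1"
    by (rule eigvals_desc_top_two[OF \<open>CARD('n) \<ge> 2\<close>])
  then have top: "\<alpha> j \<le> \<alpha> i1" for j by auto
  obtain p where p: "A *v p = \<alpha> i1 *\<^sub>R p" "0 < p \<bullet> vec 1"
    by (rule perron_eigenvector[OF nonneg top])
  have "subspace {v. A *v v = (eigvals_desc A ! 1) *\<^sub>R v}"
    by (auto simp: subspace_def matrix_vector_right_distrib matrix_vector_mult_scaleR scaleR_right_distrib)
  then obtain B where "independent B" "span B = {v. A *v v = (eigvals_desc A ! 1) *\<^sub>R v}"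
      "card {b \<in> B. b \<bullet> vec 1 \<noteq> 0} = 1"
    by (rule subspace_basis_one_outside_hyperplane) (use assms(4) \<open>\<alpha> i1 = _\<close> p in auto)
  then show ?thesis by blast
qed

lemma adjacency_matrix_symmetric:
  "simple_graph E \<Longrightarrow> transpose (adjacency_matrix E) = adjacency_matrix E"
  unfolding simple_graph_def adjacency_matrix_def transpose_def by (auto simp: vec_eq_iff)

lemma adjacency_matrix_nonneg: "0 \<le> adjacency_matrix E $ i $ j"
  unfolding adjacency_matrix_def by simp

lemma Bbar_matrix_vector: "Bbar k E *v w = (1 / (k\<^sup>2 - 1)) *\<^sub>R w - adjacency_matrix E *v w"
  unfolding Bbar_def by (simp add: matrix_vector_mult_diff_rdistrib scaleR_matrix_vector_assoc[symmetric])

theorem corollary4p5: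
  fixes E :: "'n::finite \<Rightarrow> 'n \<Rightarrow> bool" and d :: nat and k :: real
  assumes "simple_graph E"
    and "CARD('n) = d + 2"
    and "k > 1"
    and "\<forall>w. w \<bullet> vec 1 = 0 \<longrightarrow> w \<bullet> (Bbar k E *v w) \<ge> 0"
    and "\<exists>w \<gamma>. w \<noteq> 0 \<and> w \<bullet> vec 1 = 0 \<and> Bbar k E *v w = \<gamma> *\<^sub>R vec 1"
    and "det (Bbar k E) = 0"
  shows "(eigvals_desc (adjacency_matrix E) ! 0 > eigvals_desc (adjacency_matrix E) ! 1 \<longrightarrow>
           (\<forall>v. adjacency_matrix E *v v = (eigvals_desc (adjacency_matrix E) ! 1) *\<^sub>R v
                 \<longrightarrow> v \<bullet> vec 1 = 0))
       \<and> (eigvals_desc (adjacency_matrix E) ! 0 = eigvals_desc (adjacency_matrix E) ! 1 \<longrightarrow>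
           (\<exists>B. independent B \<and>
                span B = {v. adjacency_matrix E *v v = (eigvals_desc (adjacency_matrix E) ! 1) *\<^sub>R v} \<and>
                card {b \<in> B. b \<bullet> vec 1 \<noteq> 0} = 1))"
proof -
  \<comment> \<open>only the value of \<mu> enters\<close>
  define \<mu> where "\<mu> = 1 / (k\<^sup>2 - 1)"
  have Bbar: "Bbar k E *v x = \<mu> *\<^sub>R x - adjacency_matrix E *v x" for x
    by (simp add: \<mu>_def Bbar_matrix_vector)
  note symmetric = adjacency_matrix_symmetric[OF assms(1)]
  have "CARD('n) \<ge> 2" using assms(2) by simp
  have bound: "\<forall>x. x \<bullet> vec 1 = 0 \<longrightarrow> x \<bullet> (adjacency_matrix E *v x) \<le> \<mu> * (x \<bullet> x)"
    using assms(4) by (simp add: Bbar inner_diff_right)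
  obtain w \<gamma> where w: "w \<noteq> 0" "w \<bullet> vec 1 = 0" "Bbar k E *v w = \<gamma> *\<^sub>R vec 1" using assms(5) by blast
  then have "w \<bullet> (Bbar k E *v w) = 0" by simp
  then have w_extremal: "w \<bullet> (adjacency_matrix E *v w) = \<mu> * (w \<bullet> w)"
    by (simp add: Bbar inner_diff_right)
  have "\<exists>u. u \<noteq> 0 \<and> Bbar k E *v u = 0"
    using assms(6) by (simp add: det_eq_0_rank matrix_nonfull_linear_equations_eq)
  then obtain u where "u \<noteq> 0" "Bbar k E *v u = 0" by blast
  then have "adjacency_matrix E *v u = \<mu> *\<^sub>R u" "u \<noteq> 0" by (simp_all add: Bbar)
  then show ?thesis
    using second_eigenvectors_orthogonal_ones[OF symmetric adjacency_matrix_nonneg \<open>CARD('n) \<ge> 2\<close> bound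
        w(1,2) w_extremal]
      top_eigenspace_basis_one_not_orthogonal_ones[OF symmetric adjacency_matrix_nonneg \<open>CARD('n) \<ge> 2\<close>]
    by blast
qed

end
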